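(* Let $F:\mathbb{R}\to\mathbb{R}$ be a Darboux function. Then there is a continuous function $g:\mathbb{R}\to\mathbb{R}$ which is not constant such that $F+g$ is a Darboux function.
   Context: A function $F:\mathbb{R}\to\mathbb{R}$ is Darboux if it maps every connected set to a connected set; equivalently, the image under $F$ of every interval is an interval. *)

theory Defs
  imports "HOL-Analysis.Analysis"
begin

definition darboux :: "(real \<Rightarrow> real) \<Rightarrow> bool" where
  "darboux F \<longleftrightarrow> (\<forall>S::real set. connected S \<longrightarrow> connected (F ` S))"

end

(*
  Let h = arctan o F, a bounded function. Call c an e-oscillation centre if on some ball around c
  every nondegenerate closed subinterval contains, for each value h x on the ball, points where h
  exceeds h x - e and points where h is below h x + e. Since h is bounded, the e-oscillation
  centres form an open dense set. Intersecting these sets over e = 1/(n+1), each with the n-th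
  rational removed, a nested-interval construction gives a set C without rationals and a
  continuous Cantor-type function g with g 0 = 0 and g 1 = 1 that is locally constant off C.

  F + g is Darboux: if it omitted a value y on an interval, then {F + g < y} and {F + g > y} would
  both be relatively open there. Off C this holds because g is locally constant and F is Darboux.
  At a point p of C, F comes arbitrarily close to F p from above and below in every small
  interval near p; a nearby point w on the other side of y then yields (via w itself, or via a
  point off C close to w) a small interval on which g is constant and F + g crosses y.
*)

theory Submission
  imports Defs
begin

section \<open>Cantor-type functions\<close>

lemma uniformly_convergent_on_summable_steps:
  fixes f :: "nat \<Rightarrow> 'a \<Rightarrow> real"
  assumes "\<And>n x. x \<in> A \<Longrightarrow> \<bar>f (Suc n) x - f n x\<bar> \<le> M n" and "summable M"
  shows "uniformly_convergent_on A f"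
proof -
  have "uniformly_convergent_on A (\<lambda>n x. \<Sum>i<n. f (Suc i) x - f i x)"
    using assms by (intro Weierstrass_m_test') auto
  then have "uniformly_convergent_on A (\<lambda>n x. f 0 x + (\<Sum>i<n. f (Suc i) x - f i x))"
    by (intro uniformly_convergent_add) auto
  moreover have "f 0 x + (\<Sum>i<n. f (Suc i) x - f i x) = f n x" for n x
    using sum_lessThan_telescope[of "\<lambda>i. f i x" n] by simp
  ultimately show ?thesis by simp
qed

definition ramp :: "real \<times> real \<Rightarrow> real \<Rightarrow> real" where
  "ramp I x = max 0 (min 1 ((x - fst I) / (snd I - fst I)))"

lemma ramp_eq_0: "x \<le> fst I \<Longrightarrow> fst I < snd I \<Longrightarrow> ramp I x = 0"
  unfolding ramp_def by (simp add: divide_nonpos_pos)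

lemma ramp_eq_1: "snd I \<le> x \<Longrightarrow> fst I < snd I \<Longrightarrow> ramp I x = 1"
  unfolding ramp_def by simp

lemma ramp_bounds: "0 \<le> ramp I x" "ramp I x \<le> 1"
  unfolding ramp_def by auto

lemma continuous_on_ramp: "continuous_on UNIV (ramp I)"
  unfolding ramp_def divide_inverse by (intro continuous_intros)

locale open_dense_sequence =
  fixes U :: "nat \<Rightarrow> real set"
  assumes open_U: "open (U n)"
    and dense_U: "a < b \<Longrightarrow> \<exists>x\<in>{a<..<b}. x \<in> U n"
begin

lemma Icc_in_U:
  assumes "a < b"
  obtains a' b' where "a < a'" "a' < b'" "b' < b" "{a'..b'} \<subseteq> U n"
proof -
  obtain x where x: "x \<in> {a<..<b}" "x \<in> U n" using dense_U[OF assms] by blast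
  moreover have "open (U n \<inter> {a<..<b})" by (intro open_Int open_U open_greaterThanLessThan)
  ultimately obtain e where "e > 0" "ball x e \<subseteq> U n \<inter> {a<..<b}"
    by (meson IntI open_contains_ball_eq)
  moreover have "{x - e/2..x + e/2} \<subseteq> ball x e"
    using \<open>e > 0\<close> by (auto simp: dist_real_def)
  ultimately show thesis
    by (intro that[of "x - e/2" "x + e/2"]) (auto simp: subset_iff dist_real_def)
qed

definition sub_Icc :: "nat \<Rightarrow> real \<Rightarrow> real \<Rightarrow> real \<times> real" where
  "sub_Icc n a b = (SOME J. a < fst J \<and> fst J < snd J \<and> snd J < b \<and> {fst J..snd J} \<subseteq> U n)"

lemma sub_Icc_bounds:
  assumes "a < b"
  shows "a < fst (sub_Icc n a b)" "fst (sub_Icc n a b) < snd (sub_Icc n a b)"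
    "snd (sub_Icc n a b) < b" "{fst (sub_Icc n a b)..snd (sub_Icc n a b)} \<subseteq> U n"
proof -
  obtain a' b' where "a < a'" "a' < b'" "b' < b" "{a'..b'} \<subseteq> U n"
    using Icc_in_U[OF assms] .
  then have "\<exists>J. a < fst J \<and> fst J < snd J \<and> snd J < b \<and> {fst J..snd J} \<subseteq> U n"
    by (intro exI[of _ "(a', b')"]) simp
  from someI_ex[OF this] show "a < fst (sub_Icc n a b)" "fst (sub_Icc n a b) < snd (sub_Icc n a b)"
    "snd (sub_Icc n a b) < b" "{fst (sub_Icc n a b)..snd (sub_Icc n a b)} \<subseteq> U n"
    unfolding sub_Icc_def by auto
qed

primrec node :: "bool list \<Rightarrow> real \<times> real" where
  "node [] = (0, 1)"
| "node (b # s) = (case node s of (l, u) \<Rightarrow>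
     if b then sub_Icc (length s) ((l + u) / 2) u else sub_Icc (length s) l ((l + u) / 2))"

declare node.simps(2) [simp del]

abbreviation lo :: "bool list \<Rightarrow> real" where "lo s \<equiv> fst (node s)"
abbreviation hi :: "bool list \<Rightarrow> real" where "hi s \<equiv> snd (node s)"

lemma node_children_if_nondegenerate:
  assumes "lo s < hi s"
  shows "lo s < lo (False # s)" "lo (False # s) < hi (False # s)"
    "hi (False # s) < lo (True # s)" "lo (True # s) < hi (True # s)" "hi (True # s) < hi s"
    "{lo (b # s)..hi (b # s)} \<subseteq> U (length s)"
proof -
  define m where "m = (lo s + hi s) / 2"
  have "lo s < m" "m < hi s" using assms by (auto simp: m_def)
  have F: "node (False # s) = sub_Icc (length s) (lo s) m" and T: "node (True # s) = sub_Icc (length s) m (hi s)"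
    by (simp_all add: node.simps m_def split: prod.split)
  show "lo s < lo (False # s)" "lo (False # s) < hi (False # s)"
    "hi (False # s) < lo (True # s)" "lo (True # s) < hi (True # s)" "hi (True # s) < hi s"
    "{lo (b # s)..hi (b # s)} \<subseteq> U (length s)"
    using sub_Icc_bounds[OF \<open>lo s < m\<close>, of "length s"] sub_Icc_bounds[OF \<open>m < hi s\<close>, of "length s"]
    by (simp_all add: F T) (cases b; simp add: F T)
qed

lemma lo_less_hi: "lo s < hi s"
proof (induction s)
  case (Cons b s)
  then show ?case
    by (cases b) (simp_all add: node_children_if_nondegenerate)
qed simp

lemmas node_children = node_children_if_nondegenerate[OF lo_less_hi]

primrec cantor_approx :: "nat \<Rightarrow> bool list \<Rightarrow> real \<Rightarrow> real" where
  "cantor_approx 0 s x = ramp (node s) x"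
| "cantor_approx (Suc n) s x = (cantor_approx n (False # s) x + cantor_approx n (True # s) x) / 2"

lemma cantor_approx_eq_0: "x \<le> lo s \<Longrightarrow> cantor_approx n s x = 0"
proof (induction n arbitrary: s)
  case 0
  then show ?case using lo_less_hi by (simp add: ramp_eq_0)
next
  case (Suc n)
  have "x \<le> lo (False # s)" "x \<le> lo (True # s)"
    using Suc.prems node_children(1-3)[of s] by linarith+
  then show ?case using Suc.IH by simp
qed

lemma cantor_approx_eq_1: "hi s \<le> x \<Longrightarrow> cantor_approx n s x = 1"
proof (induction n arbitrary: s)
  case 0
  then show ?case using lo_less_hi by (simp add: ramp_eq_1)
next
  case (Suc n)
  have "hi (False # s) \<le> x" "hi (True # s) \<le> x"
    using Suc.prems node_children(3-5)[of s] by linarith+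
  then show ?case using Suc.IH by simp
qed

lemma cantor_approx_bounds: "0 \<le> cantor_approx n s x \<and> cantor_approx n s x \<le> 1"
proof (induction n arbitrary: s)
  case (Suc n)
  then show ?case using Suc.IH[of "False # s"] Suc.IH[of "True # s"] by (simp; linarith)
qed (simp add: ramp_bounds)

lemma continuous_on_cantor_approx: "continuous_on UNIV (cantor_approx n s)"
  by (induction n arbitrary: s) (simp_all add: continuous_on_ramp continuous_intros)

lemma cantor_approx_step: "\<bar>cantor_approx (Suc n) s x - cantor_approx n s x\<bar> \<le> (1/2) ^ n"
proof (induction n arbitrary: s)
  case 0
  show ?case using cantor_approx_bounds[of "Suc 0" s x] cantor_approx_bounds[of 0 s x]
    by (simp del: cantor_approx.simps add: abs_le_iff)
next
  case (Suc n)
  \<comment> \<open>The children of s are disjoint, so at x the increment vanishes on one of them.\<close>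
  define d where "d t = cantor_approx (Suc n) t x - cantor_approx n t x" for t
  have step: "cantor_approx (Suc (Suc n)) s x - cantor_approx (Suc n) s x = (d (False # s) + d (True # s)) / 2"
    by (simp add: d_def field_simps)
  have "d (False # s) = 0 \<or> d (True # s) = 0"
  proof (cases "x \<le> lo (True # s)")
    case True
    then show ?thesis unfolding d_def cantor_approx_eq_0[OF True] by simp
  next
    case False
    then have "hi (False # s) \<le> x" using node_children(3)[of s] by simp
    show ?thesis unfolding d_def cantor_approx_eq_1[OF \<open>hi (False # s) \<le> x\<close>] by simp
  qed
  then have "\<bar>d (False # s) + d (True # s)\<bar> \<le> (1/2) ^ n"
    using Suc.IH[of "False # s"] Suc.IH[of "True # s"] unfolding d_def by auto
  then show ?case unfolding step by simp
qed

primrec cantor_cover :: "nat \<Rightarrow> bool list \<Rightarrow> real set" where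
  "cantor_cover 0 s = {lo s..hi s}"
| "cantor_cover (Suc n) s = cantor_cover n (False # s) \<union> cantor_cover n (True # s)"

lemma cantor_cover_subset_U: "cantor_cover (Suc n) s \<subseteq> U (length s + n)"
proof (induction n arbitrary: s)
  case 0
  show ?case using node_children(6)[of False s] node_children(6)[of True s] by simp
next
  case (Suc n)
  have "cantor_cover (Suc (Suc n)) s = cantor_cover (Suc n) (False # s) \<union> cantor_cover (Suc n) (True # s)"
    by (rule cantor_cover.simps(2))
  then show ?case using Suc.IH[of "False # s"] Suc.IH[of "True # s"] by (simp del: cantor_cover.simps)
qed

lemma cantor_approx_locally_constant:
  "x \<notin> cantor_cover N s \<Longrightarrow> \<exists>r>0. \<forall>n\<ge>N. \<forall>z\<in>ball x r. cantor_approx n s z = cantor_approx n s x"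
proof (induction N arbitrary: s)
  case 0
  then consider "x < lo s" | "hi s < x" by force
  then show ?case
  proof cases
    case 1
    have "cantor_approx n s z = cantor_approx n s x" if "z \<in> ball x (lo s - x)" for n z
      using that 1 by (simp add: cantor_approx_eq_0 dist_real_def)
    moreover have "lo s - x > 0" using 1 by simp
    ultimately show ?thesis by blast
  next
    case 2
    have "cantor_approx n s z = cantor_approx n s x" if "z \<in> ball x (x - hi s)" for n z
      using that 2 by (simp add: cantor_approx_eq_1 dist_real_def)
    moreover have "x - hi s > 0" using 2 by simp
    ultimately show ?thesis by blast
  qed
next
  case (Suc N)
  have "x \<notin> cantor_cover N (False # s)" "x \<notin> cantor_cover N (True # s)" using Suc.prems by simp_all
  then obtain r0 r1 where r0: "r0 > 0" "\<forall>n\<ge>N. \<forall>z\<in>ball x r0. cantor_approx n (False # s) z = cantor_approx n (False # s) x"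
    and r1: "r1 > 0" "\<forall>n\<ge>N. \<forall>z\<in>ball x r1. cantor_approx n (True # s) z = cantor_approx n (True # s) x"
    using Suc.IH[of "False # s"] Suc.IH[of "True # s"] by blast
  have "cantor_approx n s z = cantor_approx n s x" if "Suc N \<le> n" "z \<in> ball x (min r0 r1)" for n z
  proof -
    obtain m where m: "n = Suc m" "N \<le> m" using \<open>Suc N \<le> n\<close> by (metis Suc_le_D Suc_le_mono)
    have "z \<in> ball x r0" "z \<in> ball x r1" using that(2) by auto
    then have "cantor_approx m (False # s) z = cantor_approx m (False # s) x"
      "cantor_approx m (True # s) z = cantor_approx m (True # s) x"
      using r0(2) r1(2) \<open>N \<le> m\<close> by blast+
    then show ?thesis unfolding m(1) cantor_approx.simps by argo
  qed
  moreover have "min r0 r1 > 0" using r0(1) r1(1) by simp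
  ultimately show ?case by blast
qed

definition cantor_fun :: "real \<Rightarrow> real" where
  "cantor_fun x = lim (\<lambda>n. cantor_approx n [] x)"

definition cantor_set :: "real set" where
  "cantor_set = (\<Inter>N. cantor_cover N [])"

lemma uniform_limit_cantor_approx: "uniform_limit UNIV (\<lambda>n. cantor_approx n []) cantor_fun sequentially"
proof -
  have "uniformly_convergent_on UNIV (\<lambda>n. cantor_approx n [])"
    by (rule uniformly_convergent_on_summable_steps[OF cantor_approx_step summable_geometric]) simp
  then show ?thesis unfolding uniformly_convergent_uniform_limit_iff cantor_fun_def .
qed

lemma continuous_on_cantor_fun: "continuous_on UNIV cantor_fun"
  by (rule uniform_limit_theorem[OF _ uniform_limit_cantor_approx])
    (simp_all add: continuous_on_cantor_approx)

lemma cantor_fun_0: "cantor_fun 0 = 0" and cantor_fun_1: "cantor_fun 1 = 1"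
  by (simp_all add: cantor_fun_def cantor_approx_eq_0 cantor_approx_eq_1)

lemma cantor_set_subset: "cantor_set \<subseteq> U n"
  using cantor_cover_subset_U[of n "[]"] by (auto simp: cantor_set_def simp del: cantor_cover.simps)

lemma cantor_fun_locally_constant:
  assumes "x \<notin> cantor_set"
  shows "\<exists>r>0. \<forall>z\<in>ball x r. cantor_fun z = cantor_fun x"
proof -
  obtain N where "x \<notin> cantor_cover N []" using assms by (auto simp: cantor_set_def)
  then obtain r where r: "r > 0" "\<forall>n\<ge>N. \<forall>z\<in>ball x r. cantor_approx n [] z = cantor_approx n [] x"
    using cantor_approx_locally_constant by blast
  have "cantor_fun z = cantor_fun x" if "z \<in> ball x r" for z
  proof -
    have "\<forall>\<^sub>F n in sequentially. cantor_approx n [] x = cantor_approx n [] z"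
    proof (rule eventually_sequentiallyI)
      show "cantor_approx n [] x = cantor_approx n [] z" if "N \<le> n" for n
        using r(2) that \<open>z \<in> ball x r\<close> by metis
    qed
    with tendsto_uniform_limitI[OF uniform_limit_cantor_approx UNIV_I]
    have "(\<lambda>n. cantor_approx n [] z) \<longlonglongrightarrow> cantor_fun x"
      by (rule Lim_transform_eventually)
    with tendsto_uniform_limitI[OF uniform_limit_cantor_approx UNIV_I] show ?thesis
      by (rule LIMSEQ_unique)
  qed
  then show ?thesis using r(1) by blast
qed

end

lemma cantor_function_exists:
  fixes U :: "nat \<Rightarrow> real set"
  assumes "\<And>n. open (U n)" and "\<And>n a b. a < b \<Longrightarrow> \<exists>x\<in>{a<..<b}. x \<in> U n"
  obtains C and g :: "real \<Rightarrow> real" where "C \<subseteq> (\<Inter>n. U n)" "continuous_on UNIV g" "g 0 = 0" "g 1 = 1"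
    "\<And>x. x \<notin> C \<Longrightarrow> \<exists>r>0. \<forall>z\<in>ball x r. g z = g x"
proof -
  interpret open_dense_sequence U using assms by unfold_locales
  show thesis
    by (rule that[OF INT_greatest[OF cantor_set_subset] continuous_on_cantor_fun cantor_fun_0
      cantor_fun_1 cantor_fun_locally_constant])
qed

section \<open>Perturbations of Darboux functions\<close>

lemma Icc_around_in_ball:
  fixes a b x r :: real
  assumes "a < b" "x \<in> {a..b}" "r > 0"
  obtains a' b' where "a' < b'" "x \<in> {a'..b'}" "{a'..b'} \<subseteq> {a..b}" "{a'..b'} \<subseteq> ball x r"
proof
  show "max a (x - r/2) < min b (x + r/2)" using assms by auto
  show "{max a (x - r/2)..min b (x + r/2)} \<subseteq> ball x r" using assms by (auto simp: dist_real_def)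
qed (use assms in auto)

lemma continuous_on_less_in_ball:
  fixes f :: "real \<Rightarrow> real"
  assumes "continuous_on UNIV f" and "f w < c"
  obtains r where "r > 0" "\<forall>z\<in>ball w r. f z < c"
proof -
  have "open {z. f z < c}" using open_Collect_less[OF assms(1) continuous_on_const] .
  moreover have "w \<in> {z. f z < c}" using assms(2) by simp
  ultimately obtain r where "r > 0" "ball w r \<subseteq> {z. f z < c}" using open_contains_ball_eq by metis
  then show thesis using that by blast
qed

lemma Icc_between_subset_ball:
  fixes p w r :: real
  shows "dist w p < r \<Longrightarrow> {min p w..max p w} \<subseteq> ball p r"
  by (auto simp: dist_real_def)

lemma connected_contains_Icc_between:
  fixes S :: "real set"
  assumes "connected S" "p \<in> S" "w \<in> S"
  shows "{min p w..max p w} \<subseteq> S"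
  using connected_contains_Icc[OF assms] connected_contains_Icc[OF assms(1,3,2)]
  by (cases "p \<le> w") (simp_all add: min_def max_def)

lemma darboux_crossing:
  assumes "darboux F" "connected T" "\<forall>z\<in>T. g z = k" "x1 \<in> T" "x2 \<in> T"
    "F x2 + k \<le> y" "y \<le> F x1 + k"
  shows "\<exists>x\<in>T. F x + g x = y"
proof -
  have "connected (F ` T)" using assms(1,2) unfolding darboux_def by blast
  then have "{F x2..F x1} \<subseteq> F ` T" using connected_contains_Icc assms(4,5) by (metis imageI)
  moreover have "y - k \<in> {F x2..F x1}" using assms(6,7) by simp
  ultimately obtain x where "x \<in> T" "F x = y - k" by (metis imageE subsetD)
  then show ?thesis using assms(3) by force
qed

lemma darboux_uminus: "darboux F \<Longrightarrow> darboux (\<lambda>x. - F x)"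
  unfolding darboux_def
proof (intro allI impI)
  fix S :: "real set" assume "\<forall>S. connected S \<longrightarrow> connected (F ` S)" "connected S"
  then have "connected (uminus ` F ` S)"
    by (intro connected_continuous_image[OF continuous_on_minus[OF continuous_on_id]]) blast
  then show "connected ((\<lambda>x. - F x) ` S)" by (simp add: image_image)
qed

definition exceeds_near :: "(real \<Rightarrow> real) \<Rightarrow> real \<Rightarrow> real \<Rightarrow> bool" where
  "exceeds_near F c M \<longleftrightarrow>
     (\<exists>\<rho>>0. \<forall>a b. a < b \<longrightarrow> {a..b} \<subseteq> cball c \<rho> \<longrightarrow> (\<exists>x\<in>{a..b}. M < F x))"

text \<open>\<open>F_below\<close> is \<open>F_above\<close> for \<open>-F\<close>, so the hypotheses are invariant under
  \<open>(F, g) \<mapsto> (-F, -g)\<close>, which turns \<open>{F + g < y}\<close> into \<open>{F + g > y}\<close>.\<close>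

locale darboux_perturbation =
  fixes F g :: "real \<Rightarrow> real" and C :: "real set"
  assumes darboux_F: "darboux F"
    and continuous_g: "continuous_on UNIV g"
    and locally_constant_g: "x \<notin> C \<Longrightarrow> \<exists>r>0. \<forall>z\<in>ball x r. g z = g x"
    and dense_complement: "a < b \<Longrightarrow> \<exists>x\<in>{a<..<b}. x \<notin> C"
    and F_above: "c \<in> C \<Longrightarrow> M < F c \<Longrightarrow> exceeds_near F c M"
    and F_below: "c \<in> C \<Longrightarrow> M < - F c \<Longrightarrow> exceeds_near (\<lambda>x. - F x) c M"
begin

lemma darboux_perturbation_uminus: "darboux_perturbation (\<lambda>x. - F x) (\<lambda>x. - g x) C"
proof
  show "darboux (\<lambda>x. - F x)" using darboux_uminus[OF darboux_F] .
  show "continuous_on UNIV (\<lambda>x. - g x)" using continuous_on_minus[OF continuous_g] .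
  show "\<exists>r>0. \<forall>z\<in>ball x r. - g z = - g x" if "x \<notin> C" for x
    using locally_constant_g[OF that] by simp
  show "\<exists>x\<in>{a<..<b}. x \<notin> C" if "a < b" for a b using dense_complement[OF that] .
  show "exceeds_near (\<lambda>x. - F x) c M" if "c \<in> C" "M < - F c" for c M
    by (rule F_below[OF that])
  show "exceeds_near (\<lambda>x. - (- F x)) c M" if "c \<in> C" "M < - (- F c)" for c M
    using F_above[OF that(1)] that(2) by simp
qed

lemma constant_piece:
  assumes "x \<notin> C" "a < b" "x \<in> {a..b}"
  obtains a' b' where "a' < b'" "x \<in> {a'..b'}" "{a'..b'} \<subseteq> {a..b}" "\<forall>z\<in>{a'..b'}. g z = g x"
proof -
  obtain r where "r > 0" and r: "\<forall>z\<in>ball x r. g z = g x" using locally_constant_g[OF assms(1)] by blast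
  obtain a' b' where "a' < b'" "x \<in> {a'..b'}" "{a'..b'} \<subseteq> {a..b}" "{a'..b'} \<subseteq> ball x r"
    using Icc_around_in_ball[OF assms(2,3) \<open>r > 0\<close>] .
  moreover from this(4) have "\<forall>z\<in>{a'..b'}. g z = g x" using r by (meson subsetD)
  ultimately show thesis by (intro that)
qed

lemma constant_piece_above:
  assumes "y < F w + g w" "a < b" "w \<in> {a..b}"
  obtains a' b' k x where "a' < b'" "{a'..b'} \<subseteq> {a..b}" "\<forall>z\<in>{a'..b'}. g z = k"
    "x \<in> {a'..b'}" "y < F x + k"
proof (cases "w \<in> C")
  case False
  obtain a' b' where "a' < b'" "w \<in> {a'..b'}" "{a'..b'} \<subseteq> {a..b}" "\<forall>z\<in>{a'..b'}. g z = g w"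
    using constant_piece[OF False assms(2,3)] .
  then show thesis using that assms(1) by blast
next
  case True
  define M where "M = (y - g w + F w) / 2"
  have "y - g w < M" "M < F w" using assms(1) by (simp_all add: M_def field_simps)
  obtain r where "r > 0" and r: "\<forall>z\<in>ball w r. y - g z < M"
    using continuous_on_less_in_ball[OF continuous_on_diff[OF continuous_on_const continuous_g] \<open>y - g w < M\<close>] .
  obtain \<rho> where "\<rho> > 0" and above: "\<forall>a b. a < b \<longrightarrow> {a..b} \<subseteq> cball w \<rho> \<longrightarrow> (\<exists>x\<in>{a..b}. M < F x)"
    using F_above[OF True \<open>M < F w\<close>] unfolding exceeds_near_def by blast
  have "min \<rho> r > 0" using \<open>\<rho> > 0\<close> \<open>r > 0\<close> by simp
  obtain a1 b1 where "a1 < b1" "w \<in> {a1..b1}" "{a1..b1} \<subseteq> {a..b}" and near: "{a1..b1} \<subseteq> ball w (min \<rho> r)"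
    using Icc_around_in_ball[OF assms(2,3) \<open>min \<rho> r > 0\<close>] .
  obtain x0 where "x0 \<in> {a1<..<b1}" "x0 \<notin> C" using dense_complement[OF \<open>a1 < b1\<close>] by blast
  then have "x0 \<in> {a1..b1}" by simp
  obtain a' b' where "a' < b'" "x0 \<in> {a'..b'}" "{a'..b'} \<subseteq> {a1..b1}"
    and const: "\<forall>z\<in>{a'..b'}. g z = g x0"
    using constant_piece[OF \<open>x0 \<notin> C\<close> \<open>a1 < b1\<close> \<open>x0 \<in> {a1..b1}\<close>] .
  have "{a'..b'} \<subseteq> cball w \<rho>" using \<open>{a'..b'} \<subseteq> {a1..b1}\<close> near by (auto simp: subset_iff)
  then obtain x where "x \<in> {a'..b'}" "M < F x" using above \<open>a' < b'\<close> by blast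
  have "x0 \<in> ball w r" using \<open>x0 \<in> {a1..b1}\<close> near by (auto simp: subset_iff)
  then have "y < F x + g x0" using r \<open>M < F x\<close> by force
  moreover have "{a'..b'} \<subseteq> {a..b}" using \<open>{a'..b'} \<subseteq> {a1..b1}\<close> \<open>{a1..b1} \<subseteq> {a..b}\<close> by (rule subset_trans)
  ultimately show thesis using that \<open>a' < b'\<close> const \<open>x \<in> {a'..b'}\<close> by blast
qed

lemma below_level_locally_off_C:
  assumes "connected S" and avoid: "\<forall>x\<in>S. F x + g x \<noteq> y" and "p \<in> S" "F p + g p < y"
    and "p \<notin> C"
  shows "\<exists>r>0. \<forall>w\<in>S. dist w p < r \<longrightarrow> F w + g w < y"
proof -
  obtain r where "r > 0" and r: "\<forall>z\<in>ball p r. g z = g p" using locally_constant_g[OF \<open>p \<notin> C\<close>] by blast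
  have "F w + g w < y" if "w \<in> S" "dist w p < r" for w
  proof (rule ccontr)
    assume "\<not> F w + g w < y"
    then have "y < F w + g w" using avoid \<open>w \<in> S\<close> by force
    have between: "{min p w..max p w} \<subseteq> S"
      using connected_contains_Icc_between assms(1,3) \<open>w \<in> S\<close> .
    have const: "\<forall>z\<in>{min p w..max p w}. g z = g p"
      using r Icc_between_subset_ball[OF \<open>dist w p < r\<close>] by blast
    have "w \<in> ball p r" using \<open>dist w p < r\<close> by (simp add: dist_commute)
    then have "g w = g p" using r by blast
    then have "F p + g p \<le> y" "y \<le> F w + g p" using \<open>F p + g p < y\<close> \<open>y < F w + g w\<close> by simp_all
    then obtain x where "x \<in> {min p w..max p w}" "F x + g x = y"
      using darboux_crossing[OF darboux_F connected_Icc const, of w p y] by auto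
    then show False using avoid between by blast
  qed
  then show ?thesis using \<open>r > 0\<close> by blast
qed

lemma below_level_locally_in_C:
  assumes "connected S" and avoid: "\<forall>x\<in>S. F x + g x \<noteq> y" and "p \<in> S" "F p + g p < y"
    and "p \<in> C"
  shows "\<exists>r>0. \<forall>w\<in>S. dist w p < r \<longrightarrow> F w + g w < y"
proof -
  define M where "M = (F p + y - g p) / 2"
  have "- M < - F p" "M + g p < y" using assms(4) by (simp_all add: M_def field_simps)
  obtain r where "r > 0" and r: "\<forall>z\<in>ball p r. M + g z < y"
    using continuous_on_less_in_ball[OF continuous_on_add[OF continuous_on_const continuous_g] \<open>M + g p < y\<close>] .
  obtain \<rho> where "\<rho> > 0"
    and below: "\<forall>a b. a < b \<longrightarrow> {a..b} \<subseteq> cball p \<rho> \<longrightarrow> (\<exists>x\<in>{a..b}. - M < - F x)"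
    using F_below[OF \<open>p \<in> C\<close> \<open>- M < - F p\<close>] unfolding exceeds_near_def by blast
  have "F w + g w < y" if "w \<in> S" "dist w p < min \<rho> r" for w
  proof (rule ccontr)
    assume "\<not> F w + g w < y"
    then have "y < F w + g w" using avoid \<open>w \<in> S\<close> by force
    then have "w \<noteq> p" using assms(4) by auto
    then have "min p w < max p w" by (auto simp: min_def max_def)
    then obtain a b k x1 where "a < b" "{a..b} \<subseteq> {min p w..max p w}" and const: "\<forall>z\<in>{a..b}. g z = k"
      and "x1 \<in> {a..b}" "y < F x1 + k"
      using constant_piece_above[OF \<open>y < F w + g w\<close>] by (metis atLeastAtMost_iff max.cobounded2 min.cobounded2)
    have near: "{a..b} \<subseteq> ball p (min \<rho> r)"
      using \<open>{a..b} \<subseteq> {min p w..max p w}\<close> Icc_between_subset_ball[OF \<open>dist w p < min \<rho> r\<close>] by blast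
    then have "{a..b} \<subseteq> cball p \<rho>" by (auto simp: subset_iff)
    then obtain x2 where "x2 \<in> {a..b}" "- M < - F x2" using below \<open>a < b\<close> by blast
    moreover have "M + g a < y" using r near \<open>a < b\<close> by (auto simp: subset_iff)
    moreover have "g a = k" using const \<open>a < b\<close> by simp
    ultimately have "F x2 + k \<le> y" by linarith
    from darboux_crossing[OF darboux_F connected_Icc const \<open>x1 \<in> {a..b}\<close> \<open>x2 \<in> {a..b}\<close> this]
    obtain x where "x \<in> {a..b}" "F x + g x = y" using \<open>y < F x1 + k\<close> by force
    moreover have "{a..b} \<subseteq> S"
      using \<open>{a..b} \<subseteq> {min p w..max p w}\<close> connected_contains_Icc_between[OF assms(1,3) \<open>w \<in> S\<close>]
      by (rule subset_trans)
    ultimately show False using avoid by blast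
  qed
  moreover have "min \<rho> r > 0" using \<open>\<rho> > 0\<close> \<open>r > 0\<close> by simp
  ultimately show ?thesis by blast
qed

lemma below_level_locally:
  assumes "connected S" "\<forall>x\<in>S. F x + g x \<noteq> y" "p \<in> S" "F p + g p < y"
  shows "\<exists>r>0. \<forall>w\<in>S. dist w p < r \<longrightarrow> F w + g w < y"
  using below_level_locally_off_C[OF assms] below_level_locally_in_C[OF assms] by blast

lemma below_level_openin:
  assumes "connected S" "\<forall>x\<in>S. F x + g x \<noteq> y"
  shows "openin (top_of_set S) {x\<in>S. F x + g x < y}"
  unfolding openin_euclidean_subtopology_iff using below_level_locally[OF assms] by auto

theorem darboux_add: "darboux (\<lambda>x. F x + g x)"
  unfolding darboux_def
proof (intro allI impI)
  fix S :: "real set" assume "connected S"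
  show "connected ((\<lambda>x. F x + g x) ` S)"
    unfolding connected_iff_interval
  proof (intro ballI allI impI)
    fix u v y assume "u \<in> (\<lambda>x. F x + g x) ` S" "v \<in> (\<lambda>x. F x + g x) ` S" "u \<le> y" "y \<le> v"
    show "y \<in> (\<lambda>x. F x + g x) ` S"
    proof (rule ccontr)
      assume "y \<notin> (\<lambda>x. F x + g x) ` S"
      then have avoid: "\<forall>x\<in>S. F x + g x \<noteq> y" by force
      have "openin (top_of_set S) {x\<in>S. F x + g x < y}"
        using below_level_openin[OF \<open>connected S\<close> avoid] .
      moreover have "\<forall>x\<in>S. - F x + - g x \<noteq> - y" using avoid by auto
      then have "openin (top_of_set S) {x\<in>S. - F x + - g x < - y}"
        by (rule darboux_perturbation.below_level_openin[OF darboux_perturbation_uminus \<open>connected S\<close>])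
      moreover have "{x\<in>S. - F x + - g x < - y} = {x\<in>S. y < F x + g x}" by auto
      moreover have "S \<subseteq> {x\<in>S. F x + g x < y} \<union> {x\<in>S. y < F x + g x}"
        using avoid by (auto simp: neq_iff)
      moreover have "{x\<in>S. F x + g x < y} \<inter> {x\<in>S. y < F x + g x} = {}" by auto
      moreover have "{x\<in>S. F x + g x < y} \<noteq> {}" "{x\<in>S. y < F x + g x} \<noteq> {}"
        using \<open>u \<in> _\<close> \<open>v \<in> _\<close> \<open>u \<le> y\<close> \<open>y \<le> v\<close> avoid by force+
      ultimately show False using \<open>connected S\<close> unfolding connected_openin by metis
    qed
  qed
qed

end

section \<open>Oscillation centres\<close>

definition sup_approached_on :: "real set \<Rightarrow> real \<Rightarrow> (real \<Rightarrow> real) \<Rightarrow> bool" where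
  "sup_approached_on J e h \<longleftrightarrow>
     (\<forall>a b x. a < b \<longrightarrow> {a..b} \<subseteq> J \<longrightarrow> x \<in> J \<longrightarrow> (\<exists>x'\<in>{a..b}. h x - e < h x'))"

definition oscillating_on :: "real set \<Rightarrow> real \<Rightarrow> (real \<Rightarrow> real) \<Rightarrow> bool" where
  "oscillating_on J e h \<longleftrightarrow> sup_approached_on J e h \<and> sup_approached_on J e (\<lambda>x. - h x)"

definition oscillation_centres :: "real \<Rightarrow> (real \<Rightarrow> real) \<Rightarrow> real set" where
  "oscillation_centres e h = {c. \<exists>\<rho>>0. oscillating_on (cball c \<rho>) e h}"

lemma sup_approached_on_mono:
  assumes "sup_approached_on J e h" and "J' \<subseteq> J" and "e \<le> e'"
  shows "sup_approached_on J' e' h"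
  unfolding sup_approached_on_def
proof (intro allI impI)
  fix a b x assume "a < b" "{a..b} \<subseteq> J'" "x \<in> J'"
  then obtain x' where "x' \<in> {a..b}" "h x - e < h x'"
    using assms(1,2) unfolding sup_approached_on_def by blast
  then show "\<exists>x'\<in>{a..b}. h x - e' < h x'" using \<open>e \<le> e'\<close> by force
qed

lemma oscillating_on_mono:
  "oscillating_on J e h \<Longrightarrow> J' \<subseteq> J \<Longrightarrow> e \<le> e' \<Longrightarrow> oscillating_on J' e' h"
  unfolding oscillating_on_def using sup_approached_on_mono by blast

lemma sup_approached_on_subinterval:
  fixes h :: "real \<Rightarrow> real"
  assumes bounded: "\<And>x. \<bar>h x\<bar> \<le> B" and "e > 0" and "a < b"
  obtains a' b' where "a \<le> a'" "a' < b'" "b' \<le> b" "sup_approached_on {a'..b'} e h"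
proof -
  \<comment> \<open>Where the property fails, h drops by e on a subinterval; h being bounded, this
      happens only finitely often.\<close>
  have descent: "\<exists>a' b'. a \<le> a' \<and> a' < b' \<and> b' \<le> b \<and> sup_approached_on {a'..b'} e h"
    if "a < b" "\<forall>x\<in>{a..b}. h x < - B + real k * e" for k a b
    using that
  proof (induction k arbitrary: a b)
    case 0
    then have "h a < - B" by simp
    then show ?case using bounded[of a] unfolding abs_le_iff by linarith
  next
    case (Suc k)
    show ?case
    proof (cases "sup_approached_on {a..b} e h")
      case True
      then show ?thesis using Suc.prems(1) by blast
    next
      case False
      then obtain a1 b1 x where "a1 < b1" "{a1..b1} \<subseteq> {a..b}" "x \<in> {a..b}"
        and drop: "\<forall>x'\<in>{a1..b1}. h x' \<le> h x - e"
        unfolding sup_approached_on_def by (meson not_less)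
      have "h x < - B + real k * e + e" using Suc.prems(2) \<open>x \<in> {a..b}\<close> by (simp add: algebra_simps)
      then have "\<forall>x'\<in>{a1..b1}. h x' < - B + real k * e" using drop by fastforce
      then obtain a' b' where "a1 \<le> a'" "a' < b'" "b' \<le> b1" "sup_approached_on {a'..b'} e h"
        using Suc.IH[OF \<open>a1 < b1\<close>] by blast
      moreover have "a \<le> a1" "b1 \<le> b" using \<open>a1 < b1\<close> \<open>{a1..b1} \<subseteq> {a..b}\<close> by auto
      ultimately show ?thesis by (meson order_trans)
    qed
  qed
  obtain k where "2 * B < real k * e" using ex_less_of_nat_mult[OF \<open>e > 0\<close>] by blast
  then have "h x < - B + real k * e" for x using bounded[of x] unfolding abs_le_iff by linarith
  then show thesis using descent[OF \<open>a < b\<close>] that by blast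
qed

lemma oscillating_on_subinterval:
  fixes h :: "real \<Rightarrow> real"
  assumes "\<And>x. \<bar>h x\<bar> \<le> B" and "e > 0" and "a < b"
  obtains a' b' where "a \<le> a'" "a' < b'" "b' \<le> b" "oscillating_on {a'..b'} e h"
proof -
  obtain a1 b1 where 1: "a \<le> a1" "a1 < b1" "b1 \<le> b" "sup_approached_on {a1..b1} e h"
    using sup_approached_on_subinterval assms by blast
  obtain a2 b2 where 2: "a1 \<le> a2" "a2 < b2" "b2 \<le> b1" "sup_approached_on {a2..b2} e (\<lambda>x. - h x)"
    using sup_approached_on_subinterval[of "\<lambda>x. - h x" B e a1 b1] assms(1,2) 1(2) by auto
  have "sup_approached_on {a2..b2} e h" using sup_approached_on_mono[OF 1(4)] 2 by auto
  then have "oscillating_on {a2..b2} e h" using 2(4) unfolding oscillating_on_def by blast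
  then show thesis using 1 2 by (intro that[of a2 b2]) auto
qed

lemma open_oscillation_centres: "open (oscillation_centres e h)"
  unfolding open_contains_ball
proof
  fix c assume "c \<in> oscillation_centres e h"
  then obtain \<rho> where "\<rho> > 0" "oscillating_on (cball c \<rho>) e h"
    unfolding oscillation_centres_def by blast
  have "c' \<in> oscillation_centres e h" if "c' \<in> ball c (\<rho>/2)" for c'
  proof -
    have "cball c' (\<rho>/2) \<subseteq> cball c \<rho>"
    proof
      fix x assume "x \<in> cball c' (\<rho>/2)"
      then show "x \<in> cball c \<rho>" using that dist_triangle[of c x c'] by (auto simp: dist_commute)
    qed
    then have "oscillating_on (cball c' (\<rho>/2)) e h"
      using oscillating_on_mono[OF \<open>oscillating_on (cball c \<rho>) e h\<close>] by blast
    then show ?thesis unfolding oscillation_centres_def using \<open>\<rho> > 0\<close> half_gt_zero by blast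
  qed
  then show "\<exists>r>0. ball c r \<subseteq> oscillation_centres e h" using \<open>\<rho> > 0\<close> by (auto intro!: exI[of _ "\<rho>/2"])
qed

lemma oscillation_centres_dense:
  fixes h :: "real \<Rightarrow> real"
  assumes "\<And>x. \<bar>h x\<bar> \<le> B" and "e > 0" and "a < b"
  shows "\<exists>c\<in>{a<..<b}. c \<in> oscillation_centres e h"
proof -
  obtain a' b' where "a \<le> a'" "a' < b'" "b' \<le> b" "oscillating_on {a'..b'} e h"
    using oscillating_on_subinterval assms by blast
  moreover have "cball ((a' + b') / 2) ((b' - a') / 2) = {a'..b'}"
    by (simp add: cball_eq_atLeastAtMost field_simps)
  ultimately show ?thesis unfolding oscillation_centres_def
    by (intro bexI[of _ "(a' + b') / 2"]) (auto intro!: exI[of _ "(b' - a') / 2"])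
qed

lemma oscillation_centres_mono:
  assumes "e \<le> e'"
  shows "oscillation_centres e h \<subseteq> oscillation_centres e' h"
proof
  fix c assume "c \<in> oscillation_centres e h"
  then obtain \<rho> where "\<rho> > 0" "oscillating_on (cball c \<rho>) e h"
    unfolding oscillation_centres_def by blast
  then have "oscillating_on (cball c \<rho>) e' h" using oscillating_on_mono[OF _ order_refl assms] by blast
  then show "c \<in> oscillation_centres e' h" unfolding oscillation_centres_def using \<open>\<rho> > 0\<close> by blast
qed

lemma oscillating_on_uminus: "oscillating_on J e (\<lambda>x. - h x) \<longleftrightarrow> oscillating_on J e h"
  unfolding oscillating_on_def by auto

lemma oscillation_centres_uminus: "oscillation_centres e (\<lambda>x. - h x) = oscillation_centres e h"
  by (simp add: oscillation_centres_def oscillating_on_uminus)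

lemma exceeds_near_if_arctan_oscillation_centre:
  assumes centre: "\<And>e. e > 0 \<Longrightarrow> c \<in> oscillation_centres e (\<lambda>x. arctan (F x))" and "M < F c"
  shows "exceeds_near F c M"
proof -
  define e where "e = arctan (F c) - arctan M"
  have "e > 0" using \<open>M < F c\<close> by (simp add: e_def arctan_less_iff)
  then obtain \<rho> where "\<rho> > 0" and "oscillating_on (cball c \<rho>) e (\<lambda>x. arctan (F x))"
    using centre unfolding oscillation_centres_def by blast
  then have sup: "sup_approached_on (cball c \<rho>) e (\<lambda>x. arctan (F x))"
    unfolding oscillating_on_def by blast
  have "\<exists>x\<in>{a..b}. M < F x" if ab: "a < b" "{a..b} \<subseteq> cball c \<rho>" for a b
  proof -
    have "c \<in> cball c \<rho>" using \<open>\<rho> > 0\<close> by simp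
    then obtain x where "x \<in> {a..b}" "arctan (F c) - e < arctan (F x)"
      using sup ab unfolding sup_approached_on_def by blast
    then show ?thesis by (auto simp: e_def arctan_less_iff)
  qed
  then show ?thesis unfolding exceeds_near_def using \<open>\<rho> > 0\<close> by blast
qed

lemma darboux_perturbation_if_arctan_oscillation_centres:
  assumes "darboux F" "continuous_on UNIV g"
    and "\<And>x. x \<notin> C \<Longrightarrow> \<exists>r>0. \<forall>z\<in>ball x r. g z = g x"
    and "C \<inter> \<rat> = {}"
    and centres: "\<And>e. e > 0 \<Longrightarrow> C \<subseteq> oscillation_centres e (\<lambda>x. arctan (F x))"
  shows "darboux_perturbation F g C"
proof
  show "\<exists>x\<in>{a<..<b}. x \<notin> C" if "a < b" for a b
    using Rats_dense_in_real[OF that] \<open>C \<inter> \<rat> = {}\<close> by auto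
  show "exceeds_near F c M" if "c \<in> C" "M < F c" for c M
    using exceeds_near_if_arctan_oscillation_centre centres that by blast
  show "exceeds_near (\<lambda>x. - F x) c M" if "c \<in> C" "M < - F c" for c M
    using exceeds_near_if_arctan_oscillation_centre[of c "\<lambda>x. - F x"] centres that
    by (simp add: arctan_minus oscillation_centres_uminus subset_iff)
qed (use assms in auto)

section \<open>Construction of the perturbation\<close>

lemma dense_Diff_singleton:
  fixes A :: "real set"
  assumes dense: "\<And>a b. a < b \<Longrightarrow> \<exists>x\<in>{a<..<b}. x \<in> A" and "a < b"
  shows "\<exists>x\<in>{a<..<b}. x \<in> A - {q}"
proof -
  obtain x where x: "x \<in> {a<..<b}" "x \<in> A" using dense[OF \<open>a < b\<close>] by blast
  then obtain x' where "x' \<in> {a<..<x}" "x' \<in> A" using dense[of a x] by auto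
  with x show ?thesis by (cases "x = q") auto
qed

lemma cantor_function_on_oscillation_centres:
  fixes h :: "real \<Rightarrow> real"
  assumes bounded: "\<And>x. \<bar>h x\<bar> \<le> B"
  obtains C and g :: "real \<Rightarrow> real"
  where "C \<inter> \<rat> = {}" "\<And>e. e > 0 \<Longrightarrow> C \<subseteq> oscillation_centres e h"
    "continuous_on UNIV g" "g 0 = 0" "g 1 = 1" "\<And>x. x \<notin> C \<Longrightarrow> \<exists>r>0. \<forall>z\<in>ball x r. g z = g x"
proof -
  \<comment> \<open>Removing the n-th rational from \<open>U n\<close> keeps C away from the rationals.\<close>
  define U where "U n = oscillation_centres (1 / Suc n) h - {from_nat_into \<rat> n}" for n
  have U_open: "open (U n)" for n
    unfolding U_def by (intro open_Diff open_oscillation_centres closed_singleton)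
  have U_dense: "\<exists>x\<in>{a<..<b}. x \<in> U n" if "a < b" for a b n
    unfolding U_def by (rule dense_Diff_singleton[OF oscillation_centres_dense[OF bounded] that]) simp
  obtain C and g :: "real \<Rightarrow> real" where C: "C \<subseteq> (\<Inter>n. U n)" and g: "continuous_on UNIV g"
    "g 0 = 0" "g 1 = 1" "\<And>x. x \<notin> C \<Longrightarrow> \<exists>r>0. \<forall>z\<in>ball x r. g z = g x"
    using cantor_function_exists[of U, OF U_open U_dense] by blast
  have "q \<notin> C" if "q \<in> \<rat>" for q
    using C someI_ex[OF from_nat_into_surj[OF countable_rat that]] unfolding U_def by blast
  then have "C \<inter> \<rat> = {}" by blast
  moreover have "C \<subseteq> oscillation_centres e h" if "e > 0" for e
  proof -
    obtain n where "inverse (real (Suc n)) < e" using reals_Archimedean[OF \<open>e > 0\<close>] by blast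
    then have "oscillation_centres (1 / Suc n) h \<subseteq> oscillation_centres e h"
      by (intro oscillation_centres_mono) (simp add: inverse_eq_divide)
    then show ?thesis using C unfolding U_def by blast
  qed
  ultimately show thesis using that g by blast
qed

theorem mainTheorem1:
  fixes F :: "real \<Rightarrow> real"
  assumes "darboux F"
  shows "\<exists>g :: real \<Rightarrow> real. continuous_on UNIV g \<and> \<not> (\<exists>c. \<forall>x. g x = c)
           \<and> darboux (\<lambda>x. F x + g x)"
proof -
  have bounded: "\<bar>arctan (F x)\<bar> \<le> pi / 2" for x
    using arctan_bounded[of "F x"] unfolding abs_le_iff by linarith
  obtain C and g :: "real \<Rightarrow> real"
    where "C \<inter> \<rat> = {}" "\<And>e. e > 0 \<Longrightarrow> C \<subseteq> oscillation_centres e (\<lambda>x. arctan (F x))"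
      and g: "continuous_on UNIV g" "g 0 = 0" "g 1 = 1"
      and "\<And>x. x \<notin> C \<Longrightarrow> \<exists>r>0. \<forall>z\<in>ball x r. g z = g x"
    using cantor_function_on_oscillation_centres[of "\<lambda>x. arctan (F x)", OF bounded] by blast
  then interpret darboux_perturbation F g C
    by (intro darboux_perturbation_if_arctan_oscillation_centres assms)
  have "\<not> (\<exists>c. \<forall>x. g x = c)" using g(2,3) by (metis zero_neq_one)
  then show ?thesis using darboux_add g(1) by blast
qed

end
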